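(* Let $U=\{1,\dots,N\}$ be a finite population with auxiliary vectors $\bm{x}_i\in\mathbb{R}^p$, $i\in U$. Let $k$ be the reproducing kernel associated with the energy distance, so that for any probability measures $P,Q$ on $\mathbb{R}^p$ with finite first moment, \[ \mathcal{E}(P,Q)=\mathrm{MMD}_k^2(P,Q)=\|\mu_P-\mu_Q\|_{\mathcal{H}_k}^2, \] where $\mathcal{H}_k$ is the reproducing kernel Hilbert space of $k$ and $\mu_P=E_{\bm{X}\sim P}[k(\bm{X},\cdot)]\in\mathcal{H}_k$ is the kernel mean embedding. Let $f\in\mathcal{H}_k$, define $y_i=f(\bm{x}_i)$ for $i\in U$, and let \[ \hat Y=\frac{N}{n}\sum_{i\in S} y_i,\qquad Y=\sum_{i\in U}y_i. \] Then for any sampling design producing a random sample $S\subset U$ of fixed size $n$, \[ E\big[(\hat Y-Y)^2\big]\le N^2\,\|f\|_{\mathcal{H}_k}^2\,E\big[\mathcal{E}(F_S,F_U)\big], \] where the expectations are with respect to the sampling design.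
   Context: For a subset $s\subset U$ of size $n$, $F_s=\frac1n\sum_{i\in s}\delta_{\bm{x}_i}$ and $F_U=\frac1N\sum_{i\in U}\delta_{\bm{x}_i}$ are the empirical distributions of the auxiliary vectors in $s$ and in $U$, where $\delta_{\bm{x}}$ is the Dirac measure at $\bm{x}$. The energy distance between distributions $P$ and $Q$ is $\mathcal{E}(P,Q)=2E\|\bm{X}-\bm{Z}\|-E\|\bm{X}-\bm{X}'\|-E\|\bm{Z}-\bm{Z}'\|$, where $\bm{X},\bm{X}'\sim P$ and $\bm{Z},\bm{Z}'\sim Q$ are independent and $\|\cdot\|$ is the Euclidean norm. *)

theory Defs
  imports "HOL-Analysis.Analysis" "HOL-Probability.Probability"
begin

definition empirical :: "(nat \<Rightarrow> 'a) \<Rightarrow> nat set \<Rightarrow> 'a pmf" where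
  "empirical x s = map_pmf x (pmf_of_set s)"

definition energy_dist :: "'a::real_normed_vector pmf \<Rightarrow> 'a pmf \<Rightarrow> real" where
  "energy_dist P Q =
     2 * measure_pmf.expectation (pair_pmf P Q) (\<lambda>(x, z). norm (x - z))
     - measure_pmf.expectation (pair_pmf P P) (\<lambda>(x, x'). norm (x - x'))
     - measure_pmf.expectation (pair_pmf Q Q) (\<lambda>(z, z'). norm (z - z'))"

definition energy_kernel :: "'a::real_normed_vector \<Rightarrow> 'a \<Rightarrow> 'a \<Rightarrow> real" where
  "energy_kernel x0 x y = norm (x - x0) + norm (y - x0) - norm (x - y)"

text \<open>An element h of H
  is identified with the function (\<lambda>x. h \<bullet> phi x).\<close>
definition is_rkhs :: "('a \<Rightarrow> 'a \<Rightarrow> real) \<Rightarrow> ('a \<Rightarrow> 'h::{real_inner,complete_space}) \<Rightarrow> bool" where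
  "is_rkhs k phi \<longleftrightarrow> (\<forall>x y. phi x \<bullet> phi y = k x y) \<and> closure (span (range phi)) = UNIV"

end

theory Submission
  imports Defs
begin

text \<open>Writing m_A for the average of the features phi (x i) over i in A, the reproducing
  property turns the estimation error into an inner product,
  N/n \<Sum>S y - \<Sum>U y = N \<langle>h, m_S - m_U\<rangle>, so by Cauchy-Schwarz its square is at most
  N^2 \<parallel>h\<parallel>^2 \<parallel>m_S - m_U\<parallel>^2. Expanding the energy kernel
  k(u,v) = \<parallel>u - x0\<parallel> + \<parallel>v - x0\<parallel> - \<parallel>u - v\<parallel> shows that the centring terms cancel in
  \<parallel>m_S - m_U\<parallel>^2, which is therefore exactly the energy distance of the two empirical
  distributions. The bound holds for every sample, hence also in expectation.\<close>

lemma pair_pmf_of_set: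
  assumes A: "finite A" "A \<noteq> {}" and B: "finite B" "B \<noteq> {}"
  shows "pair_pmf (pmf_of_set A) (pmf_of_set B) = pmf_of_set (A \<times> B)"
proof (rule pmf_eqI)
  fix p :: "'a \<times> 'b"
  have AB: "A \<times> B \<noteq> {}" "finite (A \<times> B)" using A B by auto
  show "pmf (pair_pmf (pmf_of_set A) (pmf_of_set B)) p = pmf (pmf_of_set (A \<times> B)) p"
    by (cases p) (simp add: pmf_pair pmf_of_set[OF A(2,1)] pmf_of_set[OF B(2,1)] pmf_of_set[OF AB]
        card_cartesian_product indicator_def)
qed

lemma expectation_pair_empirical:
  fixes g :: "'a \<Rightarrow> 'a \<Rightarrow> real"
  assumes "finite A" "A \<noteq> {}" "finite B" "B \<noteq> {}"
  shows "measure_pmf.expectation (pair_pmf (empirical x A) (empirical x B)) (case_prod g)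
       = (\<Sum>i\<in>A. \<Sum>j\<in>B. g (x i) (x j)) / (real (card A) * real (card B))"
proof -
  have "pair_pmf (empirical x A) (empirical x B) = map_pmf (map_prod x x) (pmf_of_set (A \<times> B))"
    using assms by (simp add: empirical_def map_pair[symmetric] map_prod_def pair_pmf_of_set)
  then show ?thesis
    using assms by (simp add: integral_pmf_of_set card_cartesian_product sum.cartesian_product split_beta)
qed

lemma energy_dist_eq_kernel_expectations:
  fixes P Q :: "'a::real_normed_vector pmf" and x0 :: 'a
  assumes P: "finite (set_pmf P)" and Q: "finite (set_pmf Q)"
  defines "E M M' \<equiv> measure_pmf.expectation (pair_pmf M M') (case_prod (energy_kernel x0))"
  shows "energy_dist P Q = E P P + E Q Q - 2 * E P Q"
proof -
  have "E M M' = measure_pmf.expectation M (\<lambda>u. norm (u - x0)) + measure_pmf.expectation M' (\<lambda>v. norm (v - x0))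
      - measure_pmf.expectation (pair_pmf M M') (\<lambda>(u, v). norm (u - v))"
    if "finite (set_pmf M)" "finite (set_pmf M')" for M M' :: "'a pmf"
  proof -
    have "integrable (pair_pmf M M') f" for f :: "'a \<times> 'a \<Rightarrow> real"
      using that by (intro integrable_measure_pmf_finite) simp
    then show ?thesis
      unfolding E_def energy_kernel_def case_prod_beta
      by (simp add: expectation_pair_pmf_fst[of _ _ "\<lambda>u. norm (u - x0)"]
          expectation_pair_pmf_snd[of _ _ "\<lambda>u. norm (u - x0)"])
  qed
  then show ?thesis
    using P Q by (simp add: energy_dist_def)
qed

definition mean_embedding :: "('a \<Rightarrow> 'h::real_vector) \<Rightarrow> (nat \<Rightarrow> 'a) \<Rightarrow> nat set \<Rightarrow> 'h" where
  "mean_embedding phi x A = (1 / real (card A)) *\<^sub>R (\<Sum>i\<in>A. phi (x i))"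

lemma inner_mean_embedding_left:
  "h \<bullet> mean_embedding phi x A = (\<Sum>i\<in>A. h \<bullet> phi (x i)) / real (card A)"
  by (simp add: mean_embedding_def inner_sum_right)

lemma inner_mean_embedding:
  fixes phi :: "'a \<Rightarrow> 'h::real_inner"
  assumes feature: "\<And>u v. phi u \<bullet> phi v = k u v"
    and "finite A" "A \<noteq> {}" "finite B" "B \<noteq> {}"
  shows "mean_embedding phi x A \<bullet> mean_embedding phi x B
       = measure_pmf.expectation (pair_pmf (empirical x A) (empirical x B)) (case_prod k)"
  using assms
  by (simp add: expectation_pair_empirical mean_embedding_def inner_sum_left inner_sum_right
      sum_divide_distrib sum.swap[of _ B])

lemma energy_dist_empirical_eq_norm_mean_embedding:
  assumes feature: "\<And>u v. phi u \<bullet> phi v = energy_kernel x0 u v"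
    and A: "finite A" "A \<noteq> {}" and B: "finite B" "B \<noteq> {}"
  shows "energy_dist (empirical x A) (empirical x B)
       = (norm (mean_embedding phi x A - mean_embedding phi x B))\<^sup>2"
proof -
  have fin: "finite (set_pmf (empirical x C))" if "finite C" "C \<noteq> {}" for C
    using that by (simp add: empirical_def)
  show ?thesis
    unfolding energy_dist_eq_kernel_expectations[OF fin[OF A] fin[OF B], of x0]
      inner_mean_embedding[OF feature A A, symmetric] inner_mean_embedding[OF feature B B, symmetric]
      inner_mean_embedding[OF feature A B, symmetric]
    by (simp add: power2_norm_eq_inner inner_diff_left inner_diff_right inner_commute)
qed

lemma expansion_estimator_error_le_energy_dist:
  assumes feature: "\<And>u v. phi u \<bullet> phi v = energy_kernel x0 u v"
    and U: "finite U" and S: "S \<subseteq> U" "S \<noteq> {}"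
  shows "(real (card U) / real (card S) * (\<Sum>i\<in>S. h \<bullet> phi (x i)) - (\<Sum>i\<in>U. h \<bullet> phi (x i)))\<^sup>2
       \<le> (real (card U))\<^sup>2 * (norm h)\<^sup>2 * energy_dist (empirical x S) (empirical x U)"
proof -
  define d where "d = mean_embedding phi x S - mean_embedding phi x U"
  have "finite S" "U \<noteq> {}" using U S finite_subset by auto
  then have "card S > 0" "card U > 0" using U S by auto
  then have "real (card U) / real (card S) * (\<Sum>i\<in>S. h \<bullet> phi (x i)) - (\<Sum>i\<in>U. h \<bullet> phi (x i))
      = real (card U) * (h \<bullet> d)"
    by (simp add: d_def inner_diff_right inner_mean_embedding_left field_simps)
  also have "(real (card U) * (h \<bullet> d))\<^sup>2 \<le> (real (card U))\<^sup>2 * (norm h * norm d)\<^sup>2"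
    using Cauchy_Schwarz_ineq[of h d] by (simp add: power_mult_distrib power2_norm_eq_inner mult_left_mono)
  also have "\<dots> = (real (card U))\<^sup>2 * (norm h)\<^sup>2 * energy_dist (empirical x S) (empirical x U)"
    using energy_dist_empirical_eq_norm_mean_embedding[OF feature \<open>finite S\<close> S(2) U \<open>U \<noteq> {}\<close>]
    by (simp add: d_def power_mult_distrib)
  finally show ?thesis .
qed

theorem proposition1:
  fixes N n :: nat
    and x :: "nat \<Rightarrow> real ^ 'p"
    and x0 :: "real ^ 'p"
    and phi :: "real ^ 'p \<Rightarrow> 'h::{real_inner,complete_space}"
    and h :: 'h
    and y :: "nat \<Rightarrow> real"
    and design :: "nat set pmf"
  assumes rkhs: "is_rkhs (energy_kernel x0) phi"
    and y_def: "\<And>i. y i = h \<bullet> phi (x i)"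
    and n_pos: "1 \<le> n"
    and design: "set_pmf design \<subseteq> {s. s \<subseteq> {1..N} \<and> card s = n}"
  shows "measure_pmf.expectation design
           (\<lambda>S. (real N / real n * (\<Sum>i\<in>S. y i) - (\<Sum>i\<in>{1..N}. y i))\<^sup>2)
         \<le> (real N)\<^sup>2 * (norm h)\<^sup>2 *
           measure_pmf.expectation design
             (\<lambda>S. energy_dist (empirical x S) (empirical x {1..N}))"
proof -
  have feature: "phi u \<bullet> phi v = energy_kernel x0 u v" for u v
    using rkhs by (simp add: is_rkhs_def)
  have pointwise: "(real N / real n * (\<Sum>i\<in>S. y i) - (\<Sum>i\<in>{1..N}. y i))\<^sup>2
         \<le> (real N)\<^sup>2 * (norm h)\<^sup>2 * energy_dist (empirical x S) (empirical x {1..N})"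
    if "S \<in> set_pmf design" for S
  proof -
    have "S \<subseteq> {1..N}" "card S = n" using that design by auto
    moreover have "S \<noteq> {}" using \<open>card S = n\<close> n_pos by auto
    ultimately show ?thesis
      using expansion_estimator_error_le_energy_dist[OF feature, of "{1..N}" S h x] by (simp add: y_def)
  qed
  have "finite (set_pmf design)"
    using design by (rule finite_subset) simp
  then have "measure_pmf.expectation design
           (\<lambda>S. (real N / real n * (\<Sum>i\<in>S. y i) - (\<Sum>i\<in>{1..N}. y i))\<^sup>2)
         \<le> measure_pmf.expectation design
             (\<lambda>S. (real N)\<^sup>2 * (norm h)\<^sup>2 * energy_dist (empirical x S) (empirical x {1..N}))"
    by (intro integral_mono_AE AE_pmfI pointwise integrable_measure_pmf_finite)
  then show ?thesis by simp
qed

end
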